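(* Let $\mu$ be a $C_0$-nice measure on $\mathbb{C}$ and $A>1$. Then $\{\Psi^\mu_{Q,A}\}_{Q}$ (indexed by dyadic squares $Q$) is a $C$-Riesz family with $C=C(C_0,A)$ depending only on $C_0$ and $A$: for any choice $\psi_Q\in\Psi^\mu_{Q,A}$ and any sequence $\{a_Q\}$ of complex numbers, $$\Big\|\sum_Q a_Q\psi_Q\Big\|_{L^2(\mu)}^2\le C\sum_Q|a_Q|^2.$$
   Context: Measures are positive locally finite Borel measures on $\mathbb{C}$; $B(z,r)$ is the open disc. $\mu$ is $C_0$-nice if $\mu(B(z,r))\le C_0r$ for all discs. Dyadic squares are $[k2^j,(k+1)2^j)\times[l2^j,(l+1)2^j)$, $j,k,l\in\mathbb{Z}$, with centre $z_Q$ and side length $\ell(Q)$. $\Psi^\mu_{Q,A}$ is the set of functions $\psi$ with $\operatorname{supp}(\psi)\subset B(z_Q,A\ell(Q))$, $\|\psi\|_{\operatorname{Lip}}\le\ell(Q)^{-3/2}$ and $\int\psi\,d\mu=0$. *)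

theory Defs
  imports "HOL-Analysis.Analysis"
begin

text \<open>A measure on the complex plane: positive Borel measure, C0-nice.
  (Local finiteness follows from niceness.)\<close>
definition nice_measure :: "real \<Rightarrow> complex measure \<Rightarrow> bool" where
  "nice_measure C0 M \<longleftrightarrow> sets M = sets borel \<and>
     (\<forall>z r. r > 0 \<longrightarrow> emeasure M (ball z r) \<le> ennreal (C0 * r))"

text \<open>Dyadic squares [k 2^j,(k+1)2^j) x [l 2^j,(l+1)2^j) indexed by (j,k,l).\<close>
type_synonym dyadic = "int \<times> int \<times> int"

definition dyadic_side :: "dyadic \<Rightarrow> real" where
  "dyadic_side Q = (case Q of (j, k, l) \<Rightarrow> 2 powr (real_of_int j))"

definition dyadic_square :: "dyadic \<Rightarrow> complex set" where
  "dyadic_square Q = (case Q of (j, k, l) \<Rightarrow>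
     {z. real_of_int k * 2 powr j \<le> Re z \<and> Re z < (real_of_int k + 1) * 2 powr j \<and>
         real_of_int l * 2 powr j \<le> Im z \<and> Im z < (real_of_int l + 1) * 2 powr j})"

definition dyadic_center :: "dyadic \<Rightarrow> complex" where
  "dyadic_center Q = (case Q of (j, k, l) \<Rightarrow>
     Complex ((real_of_int k + 1/2) * 2 powr j) ((real_of_int l + 1/2) * 2 powr j))"

definition Psi :: "complex measure \<Rightarrow> dyadic \<Rightarrow> real \<Rightarrow> (complex \<Rightarrow> complex) set" where
  "Psi M Q A = {\<psi>.
     closure {x. \<psi> x \<noteq> 0} \<subseteq> ball (dyadic_center Q) (A * dyadic_side Q) \<and>
     (dyadic_side Q powr (-3/2))-lipschitz_on UNIV \<psi> \<and>
     integrable M \<psi> \<and> (\<integral>x. \<psi> x \<partial>M) = 0}"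

end

theory Submission
  imports Defs
begin

text \<open>The family is almost orthogonal, and Schur's test turns bounded row sums of the Gram matrix
  G(Q,R) = \<integral> \<psi>_Q conj(\<psi>_R) d\<mu> into the Riesz bound. G(Q,R) vanishes unless the supports meet.
  If l(R) \<ge> l(Q), the mean zero of \<psi>_Q lets one replace \<psi>_R by its oscillation over the support
  of \<psi>_Q; with \<mu>(B(z,r)) \<le> C0 r this gives |G(Q,R)| \<le> C (l(Q)/l(R))^(3/2), and only boundedly
  many such R of each generation meet Q. If l(R) < l(Q), the same cancellation applied to \<psi>_R,
  together with the bounded overlap of the supports within one generation, bounds the whole
  generation by C (l(R)/l(Q))^(1/2). Summing this geometric decay over generations bounds every
  row sum.\<close>


lemma dyadic_side_eq: "dyadic_side Q = 2 powr real_of_int (fst Q)"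
  by (auto simp: dyadic_side_def split: prod.splits)

lemma dyadic_side_pos [simp]: "dyadic_side Q > 0"
  by (simp add: dyadic_side_eq)

lemma dyadic_side_nonneg [simp]: "0 \<le> dyadic_side Q"
  by (simp add: less_imp_le)

lemma dyadic_side_powr: "dyadic_side Q powr p = 2 powr (real_of_int (fst Q) * p)"
  by (simp add: dyadic_side_eq powr_powr)

lemma Re_dyadic_center: "Re (dyadic_center Q) = (real_of_int (fst (snd Q)) + 1/2) * dyadic_side Q"
  by (auto simp: dyadic_center_def dyadic_side_def split: prod.splits)

lemma Im_dyadic_center: "Im (dyadic_center Q) = (real_of_int (snd (snd Q)) + 1/2) * dyadic_side Q"
  by (auto simp: dyadic_center_def dyadic_side_def split: prod.splits)

lemma nice_measure_mono: "nice_measure C0 M \<Longrightarrow> C0 \<le> C1 \<Longrightarrow> nice_measure C1 M"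
  unfolding nice_measure_def
  by (meson ennreal_leI mult_right_mono order.trans less_imp_le)

lemma card_int_near_le:
  fixes c \<rho> :: real
  assumes "0 \<le> \<rho>"
  shows "finite {k::int. \<bar>c - k\<bar> < \<rho>}" and "real (card {k::int. \<bar>c - k\<bar> < \<rho>}) \<le> 2 * \<rho> + 1"
proof -
  let ?K = "{k::int. \<bar>c - k\<bar> < \<rho>}" and ?a = "\<lceil>c - \<rho>\<rceil>" and ?b = "\<lfloor>c + \<rho>\<rfloor>"
  have sub: "?K \<subseteq> {?a..?b}"
    by (auto simp: ceiling_le_iff le_floor_iff)
  then show "finite ?K"
    using finite_subset by blast
  have "real (card ?K) \<le> real (nat (?b - ?a + 1))"
    using card_mono[OF _ sub] by simp
  also have "\<dots> \<le> 2 * \<rho> + 1"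
    using assms of_int_floor_le[of "c + \<rho>"] le_of_int_ceiling[of "c - \<rho>"] by linarith
  finally show "real (card ?K) \<le> 2 * \<rho> + 1" .
qed

definition near_squares :: "dyadic set \<Rightarrow> int \<Rightarrow> complex \<Rightarrow> real \<Rightarrow> dyadic set" where
  "near_squares F j w r = {R\<in>F. fst R = j \<and> cmod (w - dyadic_center R) < r}"

lemma card_near_squares_le:
  assumes "0 \<le> r"
  shows "real (card (near_squares F j w r)) \<le> (2 * r / 2 powr j + 1)\<^sup>2"
proof -
  define s where "s = (2::real) powr j"
  have s: "s > 0" by (simp add: s_def)
  define K where "K = {k::int. \<bar>(Re w / s - 1/2) - k\<bar> < r / s}"
  define L where "L = {k::int. \<bar>(Im w / s - 1/2) - k\<bar> < r / s}"
  have rs: "0 \<le> r / s" using assms s by simp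
  have coord: "\<bar>(x / s - 1/2) - k\<bar> < r / s" if "\<bar>x - (k + 1/2) * s\<bar> < r" for x k
  proof -
    have "(x / s - 1/2) - k = (x - (k + 1/2) * s) / s" using s by (simp add: field_simps)
    then show ?thesis using that s by (simp add: divide_strict_right_mono)
  qed
  have "near_squares F j w r \<subseteq> (\<lambda>(k, l). (j, k, l)) ` (K \<times> L)"
  proof
    fix R assume R: "R \<in> near_squares F j w r"
    then obtain k l where R_eq: "R = (j, k, l)" by (cases R) (auto simp: near_squares_def)
    have side: "dyadic_side (j, k, l) = s" by (simp add: s_def dyadic_side_def)
    have "\<bar>Re w - (k + 1/2) * s\<bar> < r" "\<bar>Im w - (l + 1/2) * s\<bar> < r"
      using R abs_Re_le_cmod[of "w - dyadic_center R"] abs_Im_le_cmod[of "w - dyadic_center R"]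
      by (auto simp: near_squares_def Re_dyadic_center Im_dyadic_center side R_eq)
    then have "k \<in> K" "l \<in> L" by (auto simp: K_def L_def intro: coord)
    then show "R \<in> (\<lambda>(k, l). (j, k, l)) ` (K \<times> L)" by (force simp: R_eq)
  qed
  moreover have "finite (K \<times> L)"
    using card_int_near_le(1)[OF rs] by (simp add: K_def L_def)
  ultimately have "card (near_squares F j w r) \<le> card K * card L"
    by (metis card_cartesian_product card_image_le card_mono finite_imageI order_trans)
  then have "real (card (near_squares F j w r)) \<le> real (card K) * real (card L)"
    by (metis of_nat_le_iff of_nat_mult)
  also have "\<dots> \<le> (2 * (r / s) + 1) * (2 * (r / s) + 1)"
    using card_int_near_le(2)[OF rs] rs by (intro mult_mono) (simp_all add: K_def L_def)
  finally show ?thesis by (simp add: s_def power2_eq_square)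
qed

lemma sum_power_abs_diff_le:
  fixes q :: real and j0 :: int
  assumes "finite J" "0 \<le> q" "q < 1"
  shows "(\<Sum>j\<in>J. q ^ nat \<bar>j - j0\<bar>) \<le> 2 / (1 - q)"
proof -
  have geometric: "(\<Sum>n\<in>N. q ^ n) \<le> 1 / (1 - q)" if "finite N" for N
  proof -
    have "(\<Sum>n\<in>N. q ^ n) \<le> (\<Sum>n. q ^ n)"
      using assms that by (intro sum_le_suminf summable_geometric) auto
    also have "\<dots> = 1 / (1 - q)"
      using assms by (intro suminf_geometric) simp
    finally show ?thesis .
  qed
  have half: "(\<Sum>j\<in>J'. q ^ nat \<bar>j - j0\<bar>) \<le> 1 / (1 - q)"
    if "J' \<subseteq> J" and "inj_on (\<lambda>j. nat \<bar>j - j0\<bar>) J'" for J'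
    using geometric[of "(\<lambda>j. nat \<bar>j - j0\<bar>) ` J'"] sum.reindex[OF that(2), of "\<lambda>n. q ^ n"]
      finite_subset[OF that(1) assms(1)] by simp
  have "(\<Sum>j\<in>J. q ^ nat \<bar>j - j0\<bar>) =
      (\<Sum>j\<in>{j\<in>J. j0 \<le> j}. q ^ nat \<bar>j - j0\<bar>) + (\<Sum>j\<in>{j\<in>J. j < j0}. q ^ nat \<bar>j - j0\<bar>)"
    using assms(1) by (subst sum.union_disjoint[symmetric]) (auto intro: sum.cong)
  also have "\<dots> \<le> 1 / (1 - q) + 1 / (1 - q)"
    by (intro add_mono half) (auto simp: inj_on_def)
  finally show ?thesis by simp
qed

lemma norm_bilinear_sum_le_schur:
  fixes G :: "'i \<Rightarrow> 'i \<Rightarrow> complex" and a :: "'i \<Rightarrow> complex"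
  assumes "finite F"
    and sym: "\<And>Q R. cmod (G Q R) = cmod (G R Q)"
    and row: "\<And>Q. Q \<in> F \<Longrightarrow> (\<Sum>R\<in>F. cmod (G Q R)) \<le> K"
  shows "cmod (\<Sum>Q\<in>F. \<Sum>R\<in>F. a Q * cnj (a R) * G Q R) \<le> K * (\<Sum>Q\<in>F. (cmod (a Q))\<^sup>2)"
proof -
  have amgm: "x * y \<le> x\<^sup>2 / 2 + y\<^sup>2 / 2" for x y :: real
    using sum_squares_ge_zero[of "x - y" 0] by (simp add: power2_eq_square algebra_simps)
  have swap: "(\<Sum>Q\<in>F. \<Sum>R\<in>F. (cmod (a R))\<^sup>2 * cmod (G Q R)) = (\<Sum>Q\<in>F. \<Sum>R\<in>F. (cmod (a Q))\<^sup>2 * cmod (G Q R))"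
    by (subst sum.swap) (simp add: sym)
  have "cmod (\<Sum>Q\<in>F. \<Sum>R\<in>F. a Q * cnj (a R) * G Q R) \<le> (\<Sum>Q\<in>F. \<Sum>R\<in>F. cmod (a Q) * cmod (a R) * cmod (G Q R))"
    by (rule order_trans[OF norm_sum sum_mono], rule order_trans[OF norm_sum]) (simp add: norm_mult)
  also have "\<dots> \<le> (\<Sum>Q\<in>F. \<Sum>R\<in>F. ((cmod (a Q))\<^sup>2 / 2 + (cmod (a R))\<^sup>2 / 2) * cmod (G Q R))"
    by (intro sum_mono mult_right_mono amgm) simp
  also have "\<dots> = (\<Sum>Q\<in>F. \<Sum>R\<in>F. (cmod (a Q))\<^sup>2 * cmod (G Q R)) / 2
                  + (\<Sum>Q\<in>F. \<Sum>R\<in>F. (cmod (a R))\<^sup>2 * cmod (G Q R)) / 2"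
    by (simp add: sum.distrib distrib_right sum_divide_distrib)
  also have "\<dots> = (\<Sum>Q\<in>F. \<Sum>R\<in>F. (cmod (a Q))\<^sup>2 * cmod (G Q R))"
    using swap by simp
  also have "\<dots> = (\<Sum>Q\<in>F. (cmod (a Q))\<^sup>2 * (\<Sum>R\<in>F. cmod (G Q R)))"
    by (simp add: sum_distrib_left)
  also have "\<dots> \<le> (\<Sum>Q\<in>F. (cmod (a Q))\<^sup>2 * K)"
    by (intro sum_mono mult_left_mono row) simp_all
  finally show ?thesis by (simp add: sum_distrib_left mult.commute)
qed

lemma nn_integral_norm_sum_squared:
  fixes f :: "'i \<Rightarrow> 'a \<Rightarrow> complex" and a :: "'i \<Rightarrow> complex"
  assumes "finite F" and int: "\<And>Q R. integrable M (\<lambda>x. f Q x * cnj (f R x))"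
  shows "(\<integral>\<^sup>+ x. ennreal ((cmod (\<Sum>Q\<in>F. a Q * f Q x))\<^sup>2) \<partial>M)
    = ennreal (Re (\<Sum>Q\<in>F. \<Sum>R\<in>F. a Q * cnj (a R) * (\<integral>x. f Q x * cnj (f R x) \<partial>M)))"
proof -
  define h where "h x = (\<Sum>Q\<in>F. \<Sum>R\<in>F. a Q * cnj (a R) * (f Q x * cnj (f R x)))" for x
  have square: "(cmod (\<Sum>Q\<in>F. a Q * f Q x))\<^sup>2 = Re (h x)" for x
  proof -
    have "complex_of_real ((cmod (\<Sum>Q\<in>F. a Q * f Q x))\<^sup>2) = h x"
      unfolding complex_norm_square h_def by (simp add: sum_product cnj_sum mult_ac)
    then show ?thesis by (metis Re_complex_of_real)
  qed
  have "integrable M h"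
    unfolding h_def by (intro Bochner_Integration.integrable_sum integrable_mult_right int)
  then have "(\<integral>\<^sup>+ x. ennreal (Re (h x)) \<partial>M) = ennreal (Re (\<integral>x. h x \<partial>M))"
  proof -
    have "0 \<le> Re (h x)" for x
      by (metis square zero_le_power2)
    then show ?thesis
      using \<open>integrable M h\<close> by (simp add: nn_integral_eq_integral integrable_Re integral_Re)
  qed
  also have "(\<integral>x. h x \<partial>M) = (\<Sum>Q\<in>F. \<Sum>R\<in>F. a Q * cnj (a R) * (\<integral>x. f Q x * cnj (f R x) \<partial>M))"
    unfolding h_def by (simp add: Bochner_Integration.integral_sum integrable_mult_right int
        Bochner_Integration.integrable_sum)
  finally show ?thesis by (simp only: square)
qed

lemma lipschitz_vanishing_outside_ball_bound:
  fixes f :: "complex \<Rightarrow> 'b::real_normed_vector"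
  assumes lip: "L-lipschitz_on UNIV f" and supp: "\<And>x. f x \<noteq> 0 \<Longrightarrow> dist c x < r"
    and r: "0 \<le> r"
  shows "norm (f x) \<le> 2 * L * r"
proof (cases "f x = 0")
  case True
  then show ?thesis using lipschitz_on_nonneg[OF lip] r by simp
next
  case False
  define y where "y = x + complex_of_real (2 * r)"
  have "dist c x < r" using supp[OF False] .
  have dist_xy: "dist x y = 2 * r" using r by (simp add: y_def dist_norm)
  then have "r \<le> dist c y"
    using \<open>dist c x < r\<close> dist_triangle[of x y c] by (simp add: dist_commute)
  then have "f y = 0" using supp by (meson not_le)
  then have "norm (f x) = dist (f x) (f y)" by simp
  also have "\<dots> \<le> L * dist x y" by (rule lipschitz_onD[OF lip]) simp_all
  finally show ?thesis by (simp add: dist_xy)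
qed

lemma norm_integral_mult_cnj_le_cancellation:
  fixes f g :: "'a::metric_space \<Rightarrow> complex"
  assumes f: "integrable M f" "(\<integral>x. f x \<partial>M) = 0" and supp: "\<And>x. f x \<noteq> 0 \<Longrightarrow> dist c x < r"
    and lip: "L-lipschitz_on UNIV g" and fg: "integrable M (\<lambda>x. f x * cnj (g x))"
  shows "cmod (\<integral>x. f x * cnj (g x) \<partial>M) \<le> L * r * (\<integral>x. cmod (f x) \<partial>M)"
proof -
  \<comment> \<open>as \<open>\<integral> f = 0\<close>, the constant \<open>g c\<close> may be subtracted from \<open>g\<close>\<close>
  define h where "h x = f x * cnj (g x) - f x * cnj (g c)" for x
  have fc: "integrable M (\<lambda>x. f x * cnj (g c))" using f(1) by simp
  have "(\<integral>x. f x * cnj (g x) \<partial>M) = (\<integral>x. h x \<partial>M)"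
    using f(2) unfolding h_def by (simp add: Bochner_Integration.integral_diff[OF fg fc])
  then have "cmod (\<integral>x. f x * cnj (g x) \<partial>M) \<le> (\<integral>x. cmod (h x) \<partial>M)"
    by simp
  also have "\<dots> \<le> (\<integral>x. L * r * cmod (f x) \<partial>M)"
  proof (rule integral_mono)
    show "integrable M (\<lambda>x. cmod (h x))"
      unfolding h_def by (intro integrable_norm Bochner_Integration.integrable_diff fg fc)
    show "integrable M (\<lambda>x. L * r * cmod (f x))" using f(1) by simp
    fix x
    have "cmod (h x) = cmod (f x) * dist (g x) (g c)"
      by (simp add: h_def dist_norm norm_mult complex_mod_cnj
          flip: right_diff_distrib complex_cnj_diff)
    also have "\<dots> \<le> cmod (f x) * (L * r)"
    proof (cases "f x = 0")
      case False
      have "dist (g x) (g c) \<le> L * dist x c" by (rule lipschitz_onD[OF lip]) simp_all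
      also have "\<dots> \<le> L * r"
        using supp[OF False] lipschitz_on_nonneg[OF lip] by (simp add: dist_commute mult_left_mono)
      finally show ?thesis by (simp add: mult_left_mono)
    qed simp
    finally show "cmod (h x) \<le> L * r * cmod (f x)" by (simp add: mult.commute)
  qed
  finally show ?thesis by simp
qed

lemma integral_le_bound_mult_measure:
  fixes f :: "'a \<Rightarrow> real"
  assumes "integrable M f" "S \<in> sets M" "emeasure M S < \<infinity>"
    and "\<And>x. x \<in> S \<Longrightarrow> f x \<le> B" and "\<And>x. x \<notin> S \<Longrightarrow> f x = 0"
  shows "(\<integral>x. f x \<partial>M) \<le> B * measure M S"
proof -
  have S: "integrable M (indicat_real S)"
    using assms(2,3) by (rule integrable_real_indicator)
  have "(\<integral>x. f x \<partial>M) \<le> (\<integral>x. B * indicat_real S x \<partial>M)"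
    using assms S by (intro integral_mono) (auto split: split_indicator)
  also have "\<dots> = B * measure M S"
    using assms(2) by (simp add: Int_absorb2 sets.sets_into_space)
  finally show ?thesis .
qed

locale nice_psi_family =
  fixes M :: "complex measure" and C0 A :: real and \<psi> :: "dyadic \<Rightarrow> complex \<Rightarrow> complex"
  assumes nice: "nice_measure C0 M" and C0_nonneg: "0 \<le> C0" and A_gt_1: "1 < A"
    and psi: "\<And>Q. \<psi> Q \<in> Psi M Q A"
begin

lemma A_pos [simp]: "0 < A"
  using A_gt_1 by simp

lemma A_nonneg [simp]: "0 \<le> A"
  using A_gt_1 by simp

lemma support_radius_pos [simp]: "0 < A * dyadic_side Q"
  by simp

lemma sets_M: "sets M = sets borel"
  using nice by (simp add: nice_measure_def)

lemma ball_in_sets [simp]: "ball z r \<in> sets M"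
  by (simp add: sets_M)

lemma emeasure_ball_le: "0 < r \<Longrightarrow> emeasure M (ball z r) \<le> ennreal (C0 * r)"
  using nice by (simp add: nice_measure_def)

lemma emeasure_ball_finite: "emeasure M (ball z r) < \<infinity>"
proof (cases "0 < r")
  case True
  then show ?thesis using emeasure_ball_le[OF True, of z] by (simp add: le_less_trans)
next
  case False
  then have "ball z r = {}" by simp
  then show ?thesis by (simp del: ball_eq_empty)
qed

lemma measure_ball_le: "0 < r \<Longrightarrow> measure M (ball z r) \<le> C0 * r"
  using emeasure_ball_le[of r z] C0_nonneg by (simp add: measure_def enn2real_leI)

lemma psi_support: "\<psi> Q x \<noteq> 0 \<Longrightarrow> dist (dyadic_center Q) x < A * dyadic_side Q"
  using psi[of Q] closure_subset[of "{x. \<psi> Q x \<noteq> 0}"] by (auto simp: Psi_def)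

lemma psi_lipschitz: "(dyadic_side Q powr (-3/2))-lipschitz_on UNIV (\<psi> Q)"
  using psi[of Q] by (simp add: Psi_def)

lemma psi_integrable: "integrable M (\<psi> Q)"
  using psi[of Q] by (simp add: Psi_def)

lemma psi_integral_eq_0: "(\<integral>x. \<psi> Q x \<partial>M) = 0"
  using psi[of Q] by (simp add: Psi_def)

lemma psi_continuous: "continuous_on UNIV (\<psi> Q)"
  by (rule lipschitz_on_continuous_on[OF psi_lipschitz])

lemma psi_measurable [measurable]: "\<psi> Q \<in> borel_measurable M"
  using borel_measurable_continuous_onI[OF psi_continuous]
  by (simp add: measurable_cong_sets[OF sets_M refl])

lemma cnj_psi_measurable [measurable]: "(\<lambda>x. cnj (\<psi> Q x)) \<in> borel_measurable M"
  using borel_measurable_continuous_onI[OF continuous_on_cnj[OF psi_continuous]]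
  by (simp add: measurable_cong_sets[OF sets_M refl])

lemma norm_psi_le: "cmod (\<psi> Q x) \<le> 2 * A * dyadic_side Q powr (-1/2)"
proof -
  have "cmod (\<psi> Q x) \<le> 2 * dyadic_side Q powr (-3/2) * (A * dyadic_side Q)"
    using psi_support less_imp_le[OF support_radius_pos]
    by (rule lipschitz_vanishing_outside_ball_bound[OF psi_lipschitz])
  also have "\<dots> = 2 * A * (dyadic_side Q powr (-3/2) * dyadic_side Q powr 1)"
    by (simp add: less_imp_le)
  finally show ?thesis unfolding powr_add[symmetric] by simp
qed

lemma integral_norm_psi_le: "(\<integral>x. cmod (\<psi> Q x) \<partial>M) \<le> 2 * A\<^sup>2 * C0 * dyadic_side Q powr (1/2)"
proof -
  let ?s = "dyadic_side Q"
  have "\<psi> Q x = 0" if "x \<notin> ball (dyadic_center Q) (A * ?s)" for x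
    using psi_support[of Q x] that by auto
  then have "(\<integral>x. cmod (\<psi> Q x) \<partial>M) \<le> 2 * A * ?s powr (-1/2) * measure M (ball (dyadic_center Q) (A * ?s))"
    using norm_psi_le
    by (intro integral_le_bound_mult_measure integrable_norm psi_integrable emeasure_ball_finite) auto
  also have "\<dots> \<le> 2 * A * ?s powr (-1/2) * (C0 * (A * ?s))"
    using A_gt_1 by (intro mult_left_mono measure_ball_le) simp_all
  also have "\<dots> = 2 * A\<^sup>2 * C0 * (?s powr (-1/2) * ?s powr 1)"
    by (simp add: power2_eq_square less_imp_le)
  finally show ?thesis unfolding powr_add[symmetric] by simp
qed

definition gram :: "dyadic \<Rightarrow> dyadic \<Rightarrow> complex" where
  "gram Q R = (\<integral>x. \<psi> Q x * cnj (\<psi> R x) \<partial>M)"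

lemma integrable_psi_mult_cnj: "integrable M (\<lambda>x. \<psi> Q x * cnj (\<psi> R x))"
proof (rule Bochner_Integration.integrable_bound)
  let ?B = "2 * A * dyadic_side R powr (-1/2)"
  show "integrable M (\<lambda>x. complex_of_real ?B * \<psi> Q x)"
    using psi_integrable by simp
  show "AE x in M. norm (\<psi> Q x * cnj (\<psi> R x)) \<le> norm (complex_of_real ?B * \<psi> Q x)"
    using norm_psi_le[of R] A_gt_1 by (auto simp: norm_mult mult.commute intro!: mult_left_mono)
qed measurable

lemma norm_gram_commute: "cmod (gram Q R) = cmod (gram R Q)"
proof -
  have "gram R Q = (\<integral>x. cnj (\<psi> Q x * cnj (\<psi> R x)) \<partial>M)"
    unfolding gram_def by (simp add: mult.commute)
  also have "\<dots> = cnj (gram Q R)"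
    unfolding gram_def by (rule Bochner_Integration.integral_cnj)
  finally show ?thesis by simp
qed

lemma gram_eq_0_if_far:
  assumes "A * (dyadic_side Q + dyadic_side R) \<le> cmod (dyadic_center Q - dyadic_center R)"
  shows "gram Q R = 0"
proof -
  have "(\<lambda>x. \<psi> Q x * cnj (\<psi> R x)) = (\<lambda>x. 0)"
  proof (rule ext, rule ccontr)
    fix x
    assume "\<psi> Q x * cnj (\<psi> R x) \<noteq> 0"
    then have "dist (dyadic_center Q) x < A * dyadic_side Q" "dist (dyadic_center R) x < A * dyadic_side R"
      by (auto intro: psi_support)
    then show False
      using assms dist_triangle3[of "dyadic_center Q" "dyadic_center R" x]
      by (simp add: dist_norm distrib_left norm_minus_commute)
  qed
  then show ?thesis by (simp add: gram_def)
qed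

lemma norm_gram_le:
  "cmod (gram Q R) \<le> dyadic_side R powr (-3/2) * (A * dyadic_side Q) * (\<integral>x. cmod (\<psi> Q x) \<partial>M)"
  unfolding gram_def
  by (rule norm_integral_mult_cnj_le_cancellation[OF psi_integrable psi_integral_eq_0 psi_support
      psi_lipschitz integrable_psi_mult_cnj])


lemma norm_gram_le_side_ratio:
  "cmod (gram Q R) \<le> 2 * A ^ 3 * C0 * (dyadic_side Q / dyadic_side R) powr (3/2)"
proof -
  let ?l = "dyadic_side Q" and ?s = "dyadic_side R"
  have "cmod (gram Q R) \<le> ?s powr (-3/2) * (A * ?l) * (\<integral>x. cmod (\<psi> Q x) \<partial>M)"
    by (rule norm_gram_le)
  also have "\<dots> \<le> ?s powr (-3/2) * (A * ?l) * (2 * A\<^sup>2 * C0 * ?l powr (1/2))"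
    by (rule mult_left_mono[OF integral_norm_psi_le]) (simp add: zero_le_mult_iff)
  also have "\<dots> = 2 * A ^ 3 * C0 * ((?l * ?l powr (1/2)) / ?s powr (3/2))"
    using powr_minus_divide[of ?s "3/2"] by (simp add: power2_eq_square power3_eq_cube)
  also have "?l * ?l powr (1/2) = ?l powr (3/2)"
    using powr_add[of ?l 1 "1/2"] by simp
  finally show ?thesis by (simp add: powr_divide)
qed

lemma sum_norm_gram_generation_eq_near:
  fixes j :: int
  assumes "finite F"
  shows "(\<Sum>R\<in>{R\<in>F. fst R = j}. cmod (gram Q R))
       = (\<Sum>R\<in>near_squares F j (dyadic_center Q) (A * (dyadic_side Q + 2 powr j)). cmod (gram Q R))"
proof (rule sum.mono_neutral_right)
  show "\<forall>R\<in>{R\<in>F. fst R = j} - near_squares F j (dyadic_center Q) (A * (dyadic_side Q + 2 powr j)).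
          cmod (gram Q R) = 0"
    by (auto simp: near_squares_def dyadic_side_eq not_less intro!: gram_eq_0_if_far)
qed (auto simp: assms near_squares_def)

lemma sum_norm_gram_coarser_le:
  fixes j :: int
  assumes "finite F" "fst Q \<le> j"
  shows "(\<Sum>R\<in>{R\<in>F. fst R = j}. cmod (gram Q R))
       \<le> (4 * A + 1)\<^sup>2 * (2 * A ^ 3 * C0 * 2 powr (3/2 * (fst Q - j)))"
proof -
  let ?N = "near_squares F j (dyadic_center Q) (A * (dyadic_side Q + 2 powr j))"
  have "dyadic_side Q \<le> 2 powr j" using assms(2) by (simp add: dyadic_side_eq)
  then have "2 * (A * (dyadic_side Q + 2 powr j)) / 2 powr j \<le> 4 * A"
    by (simp add: field_simps)
  have "real (card ?N) \<le> (2 * (A * (dyadic_side Q + 2 powr j)) / 2 powr j + 1)\<^sup>2"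
    by (rule card_near_squares_le) (simp add: zero_le_mult_iff)
  also have "\<dots> \<le> (4 * A + 1)\<^sup>2"
    using \<open>2 * (A * (dyadic_side Q + 2 powr j)) / 2 powr j \<le> 4 * A\<close>
    by (intro power_mono add_mono) (simp_all add: zero_le_mult_iff)
  finally have card: "real (card ?N) \<le> (4 * A + 1)\<^sup>2" .
  have "cmod (gram Q R) \<le> 2 * A ^ 3 * C0 * 2 powr (3/2 * (fst Q - j))" if "R \<in> ?N" for R
  proof -
    have "dyadic_side Q / dyadic_side R = 2 powr (fst Q - j)"
      using that by (simp add: near_squares_def dyadic_side_eq flip: powr_diff)
    then show ?thesis using norm_gram_le_side_ratio[of Q R] by (simp add: powr_powr mult.commute)
  qed
  then have "(\<Sum>R\<in>?N. cmod (gram Q R)) \<le> real (card ?N) * (2 * A ^ 3 * C0 * 2 powr (3/2 * (fst Q - j)))"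
    by (rule sum_bounded_above)
  also have "\<dots> \<le> (4 * A + 1)\<^sup>2 * (2 * A ^ 3 * C0 * 2 powr (3/2 * (fst Q - j)))"
    using card C0_nonneg by (intro mult_right_mono) (auto intro!: mult_nonneg_nonneg)
  finally show ?thesis using sum_norm_gram_generation_eq_near[OF assms(1)] by simp
qed


lemma sum_norm_psi_generation_le:
  fixes j :: int
  assumes "finite S" "S \<subseteq> {R. fst R = j}"
  shows "(\<Sum>R\<in>S. cmod (\<psi> R x)) \<le> (2 * A + 1)\<^sup>2 * (2 * A * (2 powr j) powr (-1/2))"
proof -
  let ?N = "near_squares S j x (A * 2 powr j)"
  have side: "dyadic_side R = 2 powr j" if "R \<in> S" for R
    using assms(2) that by (auto simp: dyadic_side_eq)
  have "(\<Sum>R\<in>S. cmod (\<psi> R x)) = (\<Sum>R\<in>?N. cmod (\<psi> R x))"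
  proof (rule sum.mono_neutral_right)
    show "\<forall>R\<in>S - ?N. cmod (\<psi> R x) = 0"
      using psi_support side assms(2)
      by (force simp: near_squares_def dist_norm norm_minus_commute)
  qed (auto simp: assms(1) near_squares_def)
  also have "\<dots> \<le> real (card ?N) * (2 * A * (2 powr j) powr (-1/2))"
  proof (rule sum_bounded_above)
    fix R assume "R \<in> ?N"
    then show "cmod (\<psi> R x) \<le> 2 * A * (2 powr j) powr (-1/2)"
      using norm_psi_le[of R x] side[of R] by (simp add: near_squares_def)
  qed
  also have "\<dots> \<le> (2 * A + 1)\<^sup>2 * (2 * A * (2 powr j) powr (-1/2))"
    using card_near_squares_le[of "A * 2 powr j" S j x] by (intro mult_right_mono) simp_all
  finally show ?thesis .
qed

lemma sum_norm_gram_finer_le: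
  fixes j :: int
  assumes "finite F" "j < fst Q"
  shows "(\<Sum>R\<in>{R\<in>F. fst R = j}. cmod (gram Q R))
       \<le> (2 * A + 1)\<^sup>2 * (6 * A ^ 3 * C0 * 2 powr ((j - fst Q) / 2))"
proof -
  define l s where "l = dyadic_side Q" and "s = (2::real) powr j"
  have "0 < l" "0 < s" "s \<le> l" using assms(2) by (simp_all add: l_def s_def dyadic_side_eq)
  let ?N = "near_squares F j (dyadic_center Q) (A * (l + s))"
  let ?B = "ball (dyadic_center Q) (3 * A * l)"
  define c where "c = (2 * A + 1)\<^sup>2 * (2 * A * s powr (-1/2))"
  have N: "finite ?N" "?N \<subseteq> {R. fst R = j}"
    using assms(1) by (auto simp: near_squares_def)
  have side: "dyadic_side R = s" if "R \<in> ?N" for R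
    using that by (simp add: near_squares_def s_def dyadic_side_eq)
  have outside: "(\<Sum>R\<in>?N. cmod (\<psi> R x)) = 0" if "x \<notin> ?B" for x
  proof (intro sum.neutral ballI)
    fix R assume R: "R \<in> ?N"
    show "cmod (\<psi> R x) = 0"
    proof (rule ccontr)
      assume "cmod (\<psi> R x) \<noteq> 0"
      then have "dist (dyadic_center R) x < A * s" using psi_support[of R x] side[OF R] by simp
      moreover have "dist (dyadic_center Q) (dyadic_center R) < A * (l + s)"
        using R by (simp add: near_squares_def dist_norm)
      moreover have "A * (l + s) + A * s \<le> 3 * A * l"
        using mult_left_mono[OF \<open>s \<le> l\<close> A_nonneg] by (simp add: algebra_simps)
      ultimately have "dist (dyadic_center Q) x < 3 * A * l"
        using dist_triangle[of "dyadic_center Q" x "dyadic_center R"] by linarith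
      then show False using that by simp
    qed
  qed
  have "(\<Sum>R\<in>?N. cmod (gram Q R)) \<le> (\<Sum>R\<in>?N. l powr (-3/2) * (A * s) * (\<integral>x. cmod (\<psi> R x) \<partial>M))"
  proof (rule sum_mono)
    fix R assume "R \<in> ?N"
    then show "cmod (gram Q R) \<le> l powr (-3/2) * (A * s) * (\<integral>x. cmod (\<psi> R x) \<partial>M)"
      using norm_gram_le[of R Q] side[of R] by (simp add: norm_gram_commute[of Q] l_def)
  qed
  also have "\<dots> = l powr (-3/2) * (A * s) * (\<integral>x. (\<Sum>R\<in>?N. cmod (\<psi> R x)) \<partial>M)"
    by (simp add: sum_distrib_left integrable_norm psi_integrable)
  also have "\<dots> \<le> l powr (-3/2) * (A * s) * (c * measure M ?B)"
    unfolding c_def using outside sum_norm_psi_generation_le[OF N, folded s_def] \<open>0 < s\<close>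
    by (intro mult_left_mono integral_le_bound_mult_measure emeasure_ball_finite
        Bochner_Integration.integrable_sum integrable_norm psi_integrable) (auto simp: zero_le_mult_iff)
  also have "\<dots> \<le> l powr (-3/2) * (A * s) * (c * (C0 * (3 * A * l)))"
    using \<open>0 < l\<close> \<open>0 < s\<close> by (intro mult_left_mono measure_ball_le) (simp_all add: c_def)
  also have "\<dots> = (2 * A + 1)\<^sup>2 * (6 * A ^ 3 * C0 * ((l powr (-3/2) * l powr 1) * (s powr 1 * s powr (-1/2))))"
    using \<open>0 < l\<close> \<open>0 < s\<close> by (simp add: c_def power3_eq_cube)
  also have "(l powr (-3/2) * l powr 1) * (s powr 1 * s powr (-1/2)) = 2 powr ((j - fst Q) / 2)"
    unfolding l_def s_def dyadic_side_powr powr_add[symmetric] powr_powr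
    by (simp add: algebra_simps diff_divide_distrib)
  finally show ?thesis
    using sum_norm_gram_generation_eq_near[OF assms(1), where j=j and Q=Q] by (simp add: l_def s_def)
qed


lemma sum_norm_gram_generation_le:
  fixes j :: int
  assumes "finite F"
  shows "(\<Sum>R\<in>{R\<in>F. fst R = j}. cmod (gram Q R))
       \<le> 6 * A ^ 3 * C0 * (4 * A + 1)\<^sup>2 * (2 powr (-1/2)) ^ nat \<bar>j - fst Q\<bar>"
proof -
  have decay: "(2 powr (-1/2)) ^ nat \<bar>j - fst Q\<bar> = (2::real) powr (- \<bar>j - fst Q\<bar> / 2)"
    by (simp add: powr_realpow[symmetric] powr_powr)
  show ?thesis
  proof (cases "fst Q \<le> j")
    case True
    have "(\<Sum>R\<in>{R\<in>F. fst R = j}. cmod (gram Q R)) \<le> (4 * A + 1)\<^sup>2 * (2 * A ^ 3 * C0 * 2 powr (3/2 * (fst Q - j)))"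
      using sum_norm_gram_coarser_le[OF assms True] .
    also have "\<dots> \<le> (4 * A + 1)\<^sup>2 * (6 * A ^ 3 * C0 * 2 powr (- \<bar>j - fst Q\<bar> / 2))"
      using True C0_nonneg by (intro mult_left_mono mult_mono) simp_all
    finally show ?thesis unfolding decay by (simp add: mult_ac)
  next
    case False
    have "(\<Sum>R\<in>{R\<in>F. fst R = j}. cmod (gram Q R)) \<le> (2 * A + 1)\<^sup>2 * (6 * A ^ 3 * C0 * 2 powr ((j - fst Q) / 2))"
      using False by (intro sum_norm_gram_finer_le assms) simp
    also have "\<dots> \<le> (4 * A + 1)\<^sup>2 * (6 * A ^ 3 * C0 * 2 powr (- \<bar>j - fst Q\<bar> / 2))"
      using False C0_nonneg by (intro mult_mono power_mono) simp_all
    finally show ?thesis unfolding decay by (simp add: mult_ac)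
  qed
qed

lemma sum_norm_gram_le:
  assumes "finite F"
  shows "(\<Sum>R\<in>F. cmod (gram Q R)) \<le> 6 * A ^ 3 * C0 * (4 * A + 1)\<^sup>2 * (2 / (1 - 2 powr (-1/2)))"
proof -
  have q: "0 \<le> (2::real) powr (-1/2)" "(2::real) powr (-1/2) < 1"
    by (simp_all add: powr_less_one)
  have "(\<Sum>R\<in>F. cmod (gram Q R)) = (\<Sum>j\<in>fst ` F. \<Sum>R\<in>{R\<in>F. fst R = j}. cmod (gram Q R))"
    using assms by (intro sum.group[symmetric]) simp_all
  also have "\<dots> \<le> (\<Sum>j\<in>fst ` F. 6 * A ^ 3 * C0 * (4 * A + 1)\<^sup>2 * (2 powr (-1/2)) ^ nat \<bar>j - fst Q\<bar>)"
    by (intro sum_mono sum_norm_gram_generation_le assms)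
  also have "\<dots> = 6 * A ^ 3 * C0 * (4 * A + 1)\<^sup>2 * (\<Sum>j\<in>fst ` F. (2 powr (-1/2)) ^ nat \<bar>j - fst Q\<bar>)"
    by (simp add: sum_distrib_left)
  also have "\<dots> \<le> 6 * A ^ 3 * C0 * (4 * A + 1)\<^sup>2 * (2 / (1 - 2 powr (-1/2)))"
    using assms q C0_nonneg by (intro mult_left_mono sum_power_abs_diff_le) simp_all
  finally show ?thesis .
qed

lemma nn_integral_norm_sum_psi_squared_le:
  assumes "finite F"
  shows "(\<integral>\<^sup>+ x. ennreal ((cmod (\<Sum>Q\<in>F. a Q * \<psi> Q x))\<^sup>2) \<partial>M)
       \<le> ennreal (6 * A ^ 3 * C0 * (4 * A + 1)\<^sup>2 * (2 / (1 - 2 powr (-1/2))) * (\<Sum>Q\<in>F. (cmod (a Q))\<^sup>2))"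
proof -
  have "(\<integral>\<^sup>+ x. ennreal ((cmod (\<Sum>Q\<in>F. a Q * \<psi> Q x))\<^sup>2) \<partial>M)
      = ennreal (Re (\<Sum>Q\<in>F. \<Sum>R\<in>F. a Q * cnj (a R) * gram Q R))"
    unfolding gram_def by (rule nn_integral_norm_sum_squared[OF assms integrable_psi_mult_cnj])
  also have "\<dots> \<le> ennreal (cmod (\<Sum>Q\<in>F. \<Sum>R\<in>F. a Q * cnj (a R) * gram Q R))"
    by (intro ennreal_leI complex_Re_le_cmod)
  also have "\<dots> \<le> ennreal (6 * A ^ 3 * C0 * (4 * A + 1)\<^sup>2 * (2 / (1 - 2 powr (-1/2))) * (\<Sum>Q\<in>F. (cmod (a Q))\<^sup>2))"
    by (intro ennreal_leI norm_bilinear_sum_le_schur assms norm_gram_commute sum_norm_gram_le)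
  finally show ?thesis .
qed

end

theorem mainTheorem6:
  fixes C0 A :: real
  assumes "A > 1"
  shows "\<exists>C. \<forall>M :: complex measure. \<forall>\<psi> :: dyadic \<Rightarrow> complex \<Rightarrow> complex.
           \<forall>a :: dyadic \<Rightarrow> complex. \<forall>F :: dyadic set.
           nice_measure C0 M \<longrightarrow> (\<forall>Q. \<psi> Q \<in> Psi M Q A) \<longrightarrow> finite F \<longrightarrow>
           (\<integral>\<^sup>+ x. ennreal ((cmod (\<Sum>Q\<in>F. a Q * \<psi> Q x))\<^sup>2) \<partial>M)
             \<le> ennreal (C * (\<Sum>Q\<in>F. (cmod (a Q))\<^sup>2))"
proof (intro exI allI impI)
  fix M \<psi> a and F :: "dyadic set"
  assume "nice_measure C0 M" and "\<forall>Q. \<psi> Q \<in> Psi M Q A" and "finite F"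
  \<comment> \<open>a negative \<open>C0\<close> is still admissible: enlarging it to \<open>max C0 0\<close> keeps \<open>M\<close> nice\<close>
  then interpret nice_psi_family M "max C0 0" A \<psi>
    using assms by unfold_locales (auto elim: nice_measure_mono)
  show "(\<integral>\<^sup>+ x. ennreal ((cmod (\<Sum>Q\<in>F. a Q * \<psi> Q x))\<^sup>2) \<partial>M)
      \<le> ennreal (6 * A ^ 3 * max C0 0 * (4 * A + 1)\<^sup>2 * (2 / (1 - 2 powr (-1/2))) * (\<Sum>Q\<in>F. (cmod (a Q))\<^sup>2))"
    using nn_integral_norm_sum_psi_squared_le[OF \<open>finite F\<close>] .
qed

end
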